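(* The energy matrix $\sigma$ is symmetric and positive-definite.
   Context: Fix integers $d,p\ge 1$. Let $(Z_n)=(A_n,M_n)$ be a Markov-additive process on $\mathbb{Z}^d\times\{1,\dots,p\}$ (a Markov chain with $\mathbb{P}_{(x,i)}((A_1,M_1)=(x',i'))=\mathbb{P}_{(0,i)}((A_1,M_1)=(x'-x,i'))$), with jump matrix $\mu_{i,j}(x)=\mathbb{P}_{(0,i)}((A_1,M_1)=(x,j))$, assumed irreducible, aperiodic (for every state $(x,i)$, $\gcd\{n\ge1:\mathbb{P}_{(x,i)}(Z_n=(x,i))>0\}=1$), with finite exponential moments ($\sum_xe^{\alpha\|x\|}\mu_{i,j}(x)<\infty$ for all $\alpha>0$). Let $\pi$ be the stationary distribution of the transition matrix $\big(\sum_x\mu_{i,j}(x)\big)_{i,j}$ of $(M_n)$; local drifts $m_{i,j}=\sum_x x\mu_{i,j}(x)$, global drift $m=\sum_{i,j}\pi_im_{i,j}$. A change of section is a real $p\times d$ matrix $g$ with rows $g_i$; the $g$-changed process has jump measures ${}^g\mu_{i,j}(x)=\mu_{i,j}(x+g_j-g_i)$ ($x\in\mathbb{R}^d$) and local drifts ${}^gm_{i,j}=\sum_xx\,{}^g\mu_{i,j}(x)$. A change of section is appropriate if $\sum_j{}^gm_{i,j}=m$ for all $i$; such $g$ exist and the resulting measures ${}^g\mu_{i,j}$ do not depend on the appropriate $g$. The energy matrix is the $d\times d$ matrix $\sigma_{k,l}=\sum_{x\in\mathbb{R}^d}x_kx_l\sum_{i,j=1}^p\pi_i\,{}^g\mu_{i,j}(x)$,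 $g$ appropriate. *)

theory Defs
  imports "HOL-Analysis.Analysis"
begin

text \<open>The dimension d is the cardinality of a finite index type 'd,
  the set of internal states {1..p} is a finite type 'p.
  Points of Z^d are int^'d, points of R^d are real^'d.
  The jump matrix is mu :: 'p => 'p => int^'d => real,
  mu i j x = P_(0,i)((A_1,M_1) = (x,j)).\<close>

definition rvec :: "int^'d \<Rightarrow> real^'d" where
  "rvec x = (\<chi> k. real_of_int (x $ k))"

definition mak_kernel :: "('p \<Rightarrow> 'p \<Rightarrow> int^'d \<Rightarrow> real) \<Rightarrow> ((int^'d) \<times> 'p) \<Rightarrow> ((int^'d) \<times> 'p) \<Rightarrow> real" where
  "mak_kernel mu s t = mu (snd s) (snd t) (fst t - fst s)"

fun mak_nstep :: "('p \<Rightarrow> 'p \<Rightarrow> int^'d \<Rightarrow> real) \<Rightarrow> nat \<Rightarrow> ((int^'d) \<times> 'p) \<Rightarrow> ((int^'d) \<times> 'p) \<Rightarrow> real" where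
  "mak_nstep mu 0 s t = (if s = t then 1 else 0)"
| "mak_nstep mu (Suc n) s t = infsum (\<lambda>u. mak_nstep mu n s u * mak_kernel mu u t) UNIV"

definition is_jump_matrix :: "('p \<Rightarrow> 'p \<Rightarrow> int^'d \<Rightarrow> real) \<Rightarrow> bool" where
  "is_jump_matrix mu \<longleftrightarrow> (\<forall>i j x. 0 \<le> mu i j x) \<and>
     (\<forall>i. ((\<lambda>(j, x). mu i j x) has_sum 1) UNIV)"

definition mak_irreducible :: "('p \<Rightarrow> 'p \<Rightarrow> int^'d \<Rightarrow> real) \<Rightarrow> bool" where
  "mak_irreducible mu \<longleftrightarrow> (\<forall>s t. \<exists>n. mak_nstep mu n s t > 0)"

definition mak_aperiodic :: "('p \<Rightarrow> 'p \<Rightarrow> int^'d \<Rightarrow> real) \<Rightarrow> bool" where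
  "mak_aperiodic mu \<longleftrightarrow> (\<forall>s. Gcd {n. n \<ge> 1 \<and> mak_nstep mu n s s > 0} = 1)"

definition finite_exp_moments :: "('p \<Rightarrow> 'p \<Rightarrow> int^'d \<Rightarrow> real) \<Rightarrow> bool" where
  "finite_exp_moments mu \<longleftrightarrow>
     (\<forall>\<alpha>>0. \<forall>i j. (\<lambda>x. exp (\<alpha> * norm (rvec x)) * mu i j x) summable_on UNIV)"

definition internal_matrix :: "('p \<Rightarrow> 'p \<Rightarrow> int^'d \<Rightarrow> real) \<Rightarrow> 'p \<Rightarrow> 'p \<Rightarrow> real" where
  "internal_matrix mu i j = infsum (mu i j) UNIV"

definition is_stationary :: "('p \<Rightarrow> 'p \<Rightarrow> int^'d \<Rightarrow> real) \<Rightarrow> ('p::finite \<Rightarrow> real) \<Rightarrow> bool" where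
  "is_stationary mu \<pi> \<longleftrightarrow> (\<forall>i. 0 \<le> \<pi> i) \<and> (\<Sum>i\<in>UNIV. \<pi> i) = 1 \<and>
     (\<forall>j. (\<Sum>i\<in>UNIV. \<pi> i * internal_matrix mu i j) = \<pi> j)"

definition local_drift :: "('p \<Rightarrow> 'p \<Rightarrow> int^'d \<Rightarrow> real) \<Rightarrow> 'p \<Rightarrow> 'p \<Rightarrow> real^'d" where
  "local_drift mu i j = infsum (\<lambda>x. mu i j x *\<^sub>R rvec x) UNIV"

definition global_drift :: "('p \<Rightarrow> 'p \<Rightarrow> int^'d \<Rightarrow> real) \<Rightarrow> ('p::finite \<Rightarrow> real) \<Rightarrow> real^'d" where
  "global_drift mu \<pi> = (\<Sum>i\<in>UNIV. \<Sum>j\<in>UNIV. \<pi> i *\<^sub>R local_drift mu i j)"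

definition mu_ext :: "('p \<Rightarrow> 'p \<Rightarrow> int^'d \<Rightarrow> real) \<Rightarrow> 'p \<Rightarrow> 'p \<Rightarrow> real^'d \<Rightarrow> real" where
  "mu_ext mu i j y = (if y \<in> range rvec then mu i j (inv rvec y) else 0)"

definition changed_mu :: "('p \<Rightarrow> 'p \<Rightarrow> int^'d \<Rightarrow> real) \<Rightarrow> ('p \<Rightarrow> real^'d) \<Rightarrow> 'p \<Rightarrow> 'p \<Rightarrow> real^'d \<Rightarrow> real" where
  "changed_mu mu g i j x = mu_ext mu i j (x + g j - g i)"

definition changed_drift :: "('p \<Rightarrow> 'p \<Rightarrow> int^'d \<Rightarrow> real) \<Rightarrow> ('p \<Rightarrow> real^'d) \<Rightarrow> 'p \<Rightarrow> 'p \<Rightarrow> real^'d" where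
  "changed_drift mu g i j = infsum (\<lambda>x. changed_mu mu g i j x *\<^sub>R x) UNIV"

definition appropriate_section :: "('p \<Rightarrow> 'p \<Rightarrow> int^'d \<Rightarrow> real) \<Rightarrow> ('p::finite \<Rightarrow> real) \<Rightarrow> ('p \<Rightarrow> real^'d) \<Rightarrow> bool" where
  "appropriate_section mu \<pi> g \<longleftrightarrow> (\<forall>i. (\<Sum>j\<in>UNIV. changed_drift mu g i j) = global_drift mu \<pi>)"

definition energy_matrix :: "('p \<Rightarrow> 'p \<Rightarrow> int^'d \<Rightarrow> real) \<Rightarrow> ('p::finite \<Rightarrow> real) \<Rightarrow> ('p \<Rightarrow> real^'d) \<Rightarrow> real^'d^'d" where
  "energy_matrix mu \<pi> g = (\<chi> k l. infsum (\<lambda>x::real^'d. x $ k * x $ l *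
      (\<Sum>i\<in>UNIV. \<Sum>j\<in>UNIV. \<pi> i * changed_mu mu g i j x)) UNIV)"

definition pos_definite :: "real^'d^'d \<Rightarrow> bool" where
  "pos_definite A \<longleftrightarrow> (\<forall>v. v \<noteq> 0 \<longrightarrow> v \<bullet> (A *v v) > 0)"

end

theory Submission
  imports Defs
begin

(*
  The energy matrix is the second-moment matrix of the nonnegative weight
  w(x) = sum_{i,j} pi_i (g-changed mu_{i,j})(x), so it is symmetric and
  v^T sigma v = sum_x (v . x)^2 w(x) >= 0.  If this vanished for some v <> 0, every jump y
  from i to j with pi_i > 0 would satisfy v . y = v . (g_j - g_i); as such jumps lead to
  states j with pi_j > 0 again, v . A_n - v . g_{M_n} would be conserved along every path
  starting in such a state.  Irreducibility lets the process go from (0, i) to (e_k, i),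
  which forces v_k = 0 for every k.
*)

lemma has_sum_sum:
  fixes f :: "'i \<Rightarrow> 'a \<Rightarrow> 'b::topological_comm_monoid_add"
  assumes "finite I" "\<And>i. i \<in> I \<Longrightarrow> (f i has_sum s i) A"
  shows "((\<lambda>x. \<Sum>i\<in>I. f i x) has_sum (\<Sum>i\<in>I. s i)) A"
  using assms by (induction I rule: finite_induct) (auto intro: has_sum_add)

lemma summable_on_sum:
  fixes f :: "'i \<Rightarrow> 'a \<Rightarrow> 'b::topological_comm_monoid_add"
  assumes "finite I" "\<And>i. i \<in> I \<Longrightarrow> f i summable_on A"
  shows "(\<lambda>x. \<Sum>i\<in>I. f i x) summable_on A"
  using assms by (induction I rule: finite_induct) (auto intro: summable_on_add)

definition second_moment :: "(real^'d \<Rightarrow> real) \<Rightarrow> real^'d^'d" where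
  "second_moment w = (\<chi> k l. infsum (\<lambda>x. x $ k * x $ l * w x) UNIV)"

lemma transpose_second_moment: "transpose (second_moment w) = second_moment w"
  by (simp add: transpose_def second_moment_def vec_eq_iff mult.commute mult.left_commute)

lemma second_moment_quadratic_form:
  fixes w :: "real^'d \<Rightarrow> real"
  assumes "\<And>k l. (\<lambda>x. x $ k * x $ l * w x) summable_on UNIV"
  shows "((\<lambda>x. (v \<bullet> x)\<^sup>2 * w x) has_sum (v \<bullet> (second_moment w *v v))) UNIV"
proof -
  have "((\<lambda>x. \<Sum>k\<in>UNIV. \<Sum>l\<in>UNIV. v $ k * v $ l * (x $ k * x $ l * w x)) has_sum
        (\<Sum>k\<in>UNIV. \<Sum>l\<in>UNIV. v $ k * v $ l * second_moment w $ k $ l)) UNIV"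
    using assms by (intro has_sum_sum has_sum_cmult_right) (auto simp: second_moment_def)
  moreover have "(v \<bullet> x)\<^sup>2 * w x = (\<Sum>k\<in>UNIV. \<Sum>l\<in>UNIV. v $ k * v $ l * (x $ k * x $ l * w x))" for x
  proof -
    have "(v \<bullet> x)\<^sup>2 = (\<Sum>k\<in>UNIV. \<Sum>l\<in>UNIV. (v $ k * x $ k) * (v $ l * x $ l))"
      by (simp add: inner_vec_def power2_eq_square sum_product)
    then show ?thesis by (simp add: sum_distrib_left algebra_simps)
  qed
  moreover have "v \<bullet> (second_moment w *v v) =
      (\<Sum>k\<in>UNIV. \<Sum>l\<in>UNIV. v $ k * v $ l * second_moment w $ k $ l)"
    by (simp add: inner_vec_def matrix_vector_mult_def sum_distrib_left algebra_simps)
  ultimately show ?thesis by simp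
qed

lemma second_moment_pos_definite:
  fixes w :: "real^'d \<Rightarrow> real"
  assumes nonneg: "\<And>x. 0 \<le> w x"
    and summable: "\<And>k l. (\<lambda>x. x $ k * x $ l * w x) summable_on UNIV"
    and nondegenerate: "\<And>v. v \<noteq> 0 \<Longrightarrow> \<exists>x. 0 < w x \<and> v \<bullet> x \<noteq> 0"
  shows "pos_definite (second_moment w)"
  unfolding pos_definite_def
proof (intro allI impI)
  fix v :: "real^'d"
  assume "v \<noteq> 0"
  then obtain x where x: "0 < w x" "v \<bullet> x \<noteq> 0" using nondegenerate by blast
  have "(v \<bullet> x)\<^sup>2 * w x \<le> v \<bullet> (second_moment w *v v)"
    using finite_sum_le_has_sum[OF second_moment_quadratic_form[OF summable], of "{x}"] nonneg
    by simp
  moreover have "0 < (v \<bullet> x)\<^sup>2 * w x" using x by simp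
  ultimately show "0 < v \<bullet> (second_moment w *v v)" by linarith
qed

lemma rvec_0 [simp]: "rvec 0 = 0"
  by (simp add: rvec_def vec_eq_iff)

lemma rvec_diff: "rvec (a - b) = rvec a - rvec b"
  by (simp add: rvec_def vec_eq_iff)

lemma rvec_axis: "rvec (axis k 1) = axis k 1"
  by (simp add: rvec_def vec_eq_iff axis_def)

lemma inj_rvec: "inj rvec"
  by (auto simp: inj_def rvec_def vec_eq_iff)

lemma mu_ext_rvec [simp]: "mu_ext mu i j (rvec y) = mu i j y"
  by (simp add: mu_ext_def inv_f_f[OF inj_rvec])

lemma changed_mu_rvec: "changed_mu mu g i j (rvec y - (g j - g i)) = mu i j y"
  by (simp add: changed_mu_def)

lemma changed_mu_nonneg: "is_jump_matrix mu \<Longrightarrow> 0 \<le> changed_mu mu g i j x"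
  by (simp add: changed_mu_def mu_ext_def is_jump_matrix_def)

lemma changed_mu_summable_on_iff:
  "(\<lambda>x. f x * changed_mu mu g i j x) summable_on UNIV \<longleftrightarrow>
   (\<lambda>y. f (rvec y - (g j - g i)) * mu i j y) summable_on UNIV"
proof -
  define \<phi> where "\<phi> y = rvec y - (g j - g i)" for y
  have "inj \<phi>" using inj_rvec by (auto simp: inj_def \<phi>_def)
  have "changed_mu mu g i j x = 0" if "x \<notin> range \<phi>" for x
  proof -
    have "x + g j - g i \<notin> range rvec"
      using that by (auto simp: \<phi>_def algebra_simps)
    then show ?thesis by (simp add: changed_mu_def mu_ext_def)
  qed
  then have "(\<lambda>x. f x * changed_mu mu g i j x) summable_on UNIV \<longleftrightarrow>
      (\<lambda>x. f x * changed_mu mu g i j x) summable_on range \<phi>"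
    by (intro summable_on_cong_neutral) auto
  also have "\<dots> \<longleftrightarrow> (\<lambda>y. f (rvec y - (g j - g i)) * mu i j y) summable_on UNIV"
    using summable_on_reindex[OF \<open>inj \<phi>\<close>, of "\<lambda>x. f x * changed_mu mu g i j x"]
    by (simp add: o_def \<phi>_def changed_mu_rvec)
  finally show ?thesis .
qed

lemma exp_moment_dominated_summable:
  assumes jm: "is_jump_matrix mu" and fm: "finite_exp_moments mu" and "0 < \<alpha>"
    and bound: "\<And>y. \<bar>f y\<bar> \<le> C * exp (\<alpha> * norm (rvec y))"
  shows "(\<lambda>y. f y * mu i j y) summable_on UNIV"
proof -
  have "(\<lambda>y. exp (\<alpha> * norm (rvec y)) * mu i j y) summable_on UNIV"
    using fm \<open>0 < \<alpha>\<close> unfolding finite_exp_moments_def by blast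
  then have majorant: "(\<lambda>y. C * (exp (\<alpha> * norm (rvec y)) * mu i j y)) summable_on UNIV"
    by (rule summable_on_cmult_right)
  have dominated: "norm (f y * mu i j y) \<le> C * (exp (\<alpha> * norm (rvec y)) * mu i j y)" for y
  proof -
    have "0 \<le> mu i j y" using jm by (simp add: is_jump_matrix_def)
    with bound have "\<bar>f y\<bar> * mu i j y \<le> C * exp (\<alpha> * norm (rvec y)) * mu i j y"
      by (rule mult_right_mono)
    with \<open>0 \<le> mu i j y\<close> show ?thesis by (simp add: abs_mult mult.assoc)
  qed
  have "(\<lambda>y. norm (f y * mu i j y)) summable_on UNIV"
    by (rule Infinite_Sum.abs_summable_on_comparison_test'[OF majorant dominated])
  then show ?thesis
    using summable_on_iff_abs_summable_on_real by blast
qed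

lemma jump_measure_summable:
  assumes "is_jump_matrix mu" "finite_exp_moments mu"
  shows "mu i j summable_on UNIV"
  using exp_moment_dominated_summable[OF assms, of 1 "\<lambda>_. 1" 1] by simp

lemma power2_le_exp_double:
  fixes t :: real
  assumes "0 \<le> t"
  shows "t\<^sup>2 \<le> exp (2 * t)"
proof -
  have "t \<le> exp t"
    using exp_ge_add_one_self[of t] by linarith
  then have "t\<^sup>2 \<le> (exp t)\<^sup>2"
    using assms by (intro power_mono) auto
  then show ?thesis by (simp add: power2_eq_square exp_add[symmetric])
qed

lemma changed_mu_second_moments_summable:
  assumes "is_jump_matrix mu" "finite_exp_moments mu"
  shows "(\<lambda>x. x $ k * x $ l * changed_mu mu g i j x) summable_on UNIV"
  unfolding changed_mu_summable_on_iff
proof (rule exp_moment_dominated_summable[OF assms, of 2])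
  fix y
  define c where "c = g j - g i"
  define z where "z = rvec y - c"
  have "\<bar>z $ k * z $ l\<bar> \<le> (norm z)\<^sup>2"
    using component_le_norm_cart[of z k] component_le_norm_cart[of z l]
    by (simp add: abs_mult power2_eq_square mult_mono')
  also have "\<dots> \<le> (norm (rvec y) + norm c)\<^sup>2"
    unfolding z_def by (intro power_mono norm_triangle_ineq4) simp
  also have "\<dots> \<le> exp (2 * (norm (rvec y) + norm c))"
    by (intro power2_le_exp_double) simp
  also have "\<dots> = exp (2 * norm c) * exp (2 * norm (rvec y))"
    by (simp add: exp_add[symmetric] algebra_simps)
  finally show "\<bar>(rvec y - (g j - g i)) $ k * (rvec y - (g j - g i)) $ l\<bar>
      \<le> exp (2 * norm c) * exp (2 * norm (rvec y))"
    by (simp add: z_def c_def)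
qed simp

lemma mak_nstep_nonneg:
  assumes "is_jump_matrix mu"
  shows "0 \<le> mak_nstep mu n s t"
proof (induction n arbitrary: t)
  case 0
  then show ?case by simp
next
  case (Suc n)
  have "0 \<le> mak_kernel mu u t" for u
    using assms by (simp add: is_jump_matrix_def mak_kernel_def)
  then show ?case using Suc by (simp add: infsum_nonneg)
qed

lemma mak_nstep_pos_invariant:
  assumes jm: "is_jump_matrix mu" and "Q s"
    and step: "\<And>u t. Q u \<Longrightarrow> 0 < mak_kernel mu u t \<Longrightarrow> Q t"
  shows "0 < mak_nstep mu n s t \<Longrightarrow> Q t"
proof (induction n arbitrary: t)
  case 0
  then show ?case using \<open>Q s\<close> by (simp split: if_splits)
next
  case (Suc n)
  obtain u where u: "mak_nstep mu n s u * mak_kernel mu u t \<noteq> 0"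
    using Suc.prems infsum_0[of UNIV "\<lambda>u. mak_nstep mu n s u * mak_kernel mu u t"] by force
  moreover have "0 \<le> mak_kernel mu u t"
    using jm by (simp add: is_jump_matrix_def mak_kernel_def)
  moreover note mak_nstep_nonneg[OF jm, of n s u]
  ultimately have "0 < mak_nstep mu n s u" "0 < mak_kernel mu u t"
    by (auto simp: less_le)
  then show ?case using Suc.IH step by blast
qed

lemma stationary_pos_propagates:
  assumes jm: "is_jump_matrix mu" and fm: "finite_exp_moments mu"
    and st: "is_stationary mu \<pi>" and "0 < \<pi> i" and "0 < mu i j y"
  shows "0 < \<pi> j"
proof -
  have internal_nonneg: "0 \<le> internal_matrix mu a b" for a b
    using jm by (simp add: internal_matrix_def is_jump_matrix_def infsum_nonneg)
  have "mu i j y \<le> internal_matrix mu i j"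
    using finite_sum_le_infsum[OF jump_measure_summable[OF jm fm], of "{y}"] jm
    by (simp add: internal_matrix_def is_jump_matrix_def)
  then have "0 < \<pi> i * internal_matrix mu i j"
    using assms by simp
  also have "\<dots> \<le> (\<Sum>a\<in>UNIV. \<pi> a * internal_matrix mu a j)"
    using st internal_nonneg by (intro member_le_sum) (auto simp: is_stationary_def)
  also have "\<dots> = \<pi> j"
    using st by (simp add: is_stationary_def)
  finally show ?thesis .
qed

lemma stationary_exists_pos:
  assumes "is_stationary mu \<pi>"
  obtains i where "0 < \<pi> i"
  using assms unfolding is_stationary_def by (metis less_le sum.neutral zero_neq_one)

lemma exists_jump_not_orthogonal:
  fixes mu :: "'p::finite \<Rightarrow> 'p \<Rightarrow> int^'d \<Rightarrow> real" and v :: "real^'d"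
  assumes jm: "is_jump_matrix mu" and fm: "finite_exp_moments mu"
    and irr: "mak_irreducible mu" and st: "is_stationary mu \<pi>" and "v \<noteq> 0"
  shows "\<exists>i j y. 0 < \<pi> i \<and> 0 < mu i j y \<and> v \<bullet> (rvec y - (g j - g i)) \<noteq> 0"
proof (rule ccontr)
  assume "\<not> ?thesis"
  then have orth: "v \<bullet> rvec y = v \<bullet> (g j - g i)" if "0 < \<pi> i" "0 < mu i j y" for i j y
    using that by (auto simp: inner_diff_right)
  obtain i0 where "0 < \<pi> i0" using stationary_exists_pos[OF st] .
  define Q where "Q = (\<lambda>(z, j). 0 < \<pi> j \<and> v \<bullet> rvec z = v \<bullet> (g j - g i0))"
  have Q_step: "Q t" if "Q u" "0 < mak_kernel mu u t" for u t
  proof -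
    obtain z j z' j' where [simp]: "u = (z, j)" "t = (z', j')" by (cases u, cases t)
    have "0 < \<pi> j" and vz: "v \<bullet> rvec z = v \<bullet> (g j - g i0)" and "0 < mu j j' (z' - z)"
      using that by (auto simp: Q_def mak_kernel_def)
    then have "0 < \<pi> j'" and "v \<bullet> rvec (z' - z) = v \<bullet> (g j' - g j)"
      using stationary_pos_propagates[OF jm fm st] orth by blast+
    then show ?thesis
      using vz by (simp add: Q_def rvec_diff inner_diff_right)
  qed
  have "Q (0, i0)" using \<open>0 < \<pi> i0\<close> by (simp add: Q_def)
  have "v $ k = 0" for k
  proof -
    obtain n where "0 < mak_nstep mu n (0, i0) (axis k 1, i0)"
      using irr by (meson mak_irreducible_def)
    then have "Q (axis k 1, i0)"
      using mak_nstep_pos_invariant[of mu Q "(0, i0)"] jm \<open>Q (0, i0)\<close> Q_step by blast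
    then show ?thesis by (simp add: Q_def rvec_axis inner_axis)
  qed
  then show False using \<open>v \<noteq> 0\<close> by (simp add: vec_eq_iff)
qed

definition energy_weight :: "('p \<Rightarrow> 'p \<Rightarrow> int^'d \<Rightarrow> real) \<Rightarrow> ('p::finite \<Rightarrow> real) \<Rightarrow>
    ('p \<Rightarrow> real^'d) \<Rightarrow> real^'d \<Rightarrow> real" where
  "energy_weight mu \<pi> g x = (\<Sum>i\<in>UNIV. \<Sum>j\<in>UNIV. \<pi> i * changed_mu mu g i j x)"

lemma energy_matrix_eq_second_moment:
  "energy_matrix mu \<pi> g = second_moment (energy_weight mu \<pi> g)"
  by (simp add: energy_matrix_def second_moment_def energy_weight_def)

lemma energy_weight_nonneg:
  assumes "is_jump_matrix mu" "is_stationary mu \<pi>"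
  shows "0 \<le> energy_weight mu \<pi> g x"
  using assms unfolding energy_weight_def is_stationary_def
  by (auto intro!: sum_nonneg mult_nonneg_nonneg changed_mu_nonneg)

lemma energy_weight_pos:
  assumes "is_jump_matrix mu" "is_stationary mu \<pi>" "0 < \<pi> i" "0 < mu i j y"
  shows "0 < energy_weight mu \<pi> g (rvec y - (g j - g i))"
proof -
  let ?x = "rvec y - (g j - g i)"
  have nonneg: "0 \<le> \<pi> a * changed_mu mu g a b ?x" for a b
    using assms by (auto simp: is_stationary_def intro!: mult_nonneg_nonneg changed_mu_nonneg)
  have "0 < \<pi> i * changed_mu mu g i j ?x"
    using assms by (simp add: changed_mu_rvec)
  also have "\<dots> \<le> (\<Sum>b\<in>UNIV. \<pi> i * changed_mu mu g i b ?x)"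
    using nonneg by (intro member_le_sum) auto
  also have "\<dots> \<le> energy_weight mu \<pi> g ?x"
    unfolding energy_weight_def
    using nonneg by (intro member_le_sum[where f = "\<lambda>a. \<Sum>b\<in>UNIV. _ a b"] sum_nonneg) auto
  finally show ?thesis .
qed

lemma energy_weight_second_moments_summable:
  assumes "is_jump_matrix mu" "finite_exp_moments mu"
  shows "(\<lambda>x. x $ k * x $ l * energy_weight mu \<pi> g x) summable_on UNIV"
proof -
  have "(\<lambda>x. \<Sum>i\<in>UNIV. \<Sum>j\<in>UNIV. \<pi> i * (x $ k * x $ l * changed_mu mu g i j x)) summable_on UNIV"
    using changed_mu_second_moments_summable[OF assms]
    by (intro summable_on_sum summable_on_cmult_right) auto
  then show ?thesis
    by (simp add: energy_weight_def sum_distrib_left algebra_simps)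
qed

theorem proposition2p8:
  fixes mu :: "'p::finite \<Rightarrow> 'p \<Rightarrow> int^'d \<Rightarrow> real"
    and \<pi> :: "'p \<Rightarrow> real"
    and g :: "'p \<Rightarrow> real^'d"
  assumes "is_jump_matrix mu"
    and "mak_irreducible mu"
    and "mak_aperiodic mu"
    and "finite_exp_moments mu"
    and "is_stationary mu \<pi>"
    and "appropriate_section mu \<pi> g"
  shows "transpose (energy_matrix mu \<pi> g) = energy_matrix mu \<pi> g
       \<and> pos_definite (energy_matrix mu \<pi> g)"
proof -
  have "pos_definite (second_moment (energy_weight mu \<pi> g))"
  proof (rule second_moment_pos_definite)
    fix v :: "real^'d"
    assume "v \<noteq> 0"
    then obtain i j y where "0 < \<pi> i" "0 < mu i j y" "v \<bullet> (rvec y - (g j - g i)) \<noteq> 0"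
      using exists_jump_not_orthogonal[OF assms(1,4,2,5)] by blast
    then show "\<exists>x. 0 < energy_weight mu \<pi> g x \<and> v \<bullet> x \<noteq> 0"
      using energy_weight_pos[OF assms(1,5)] by blast
  qed (use assms energy_weight_nonneg energy_weight_second_moments_summable in auto)
  then show ?thesis
    by (simp add: energy_matrix_eq_second_moment transpose_second_moment)
qed

end
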